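(* Let $\mathcal A=(A,\le,\mathrm{app},\mathrm{imp},\mathsf k,\mathsf s,\Phi)$ be a full adjunction implicative ordered combinatory algebra. Define $\mathcal K_{\mathcal A\bullet}=(\Lambda,\Pi,\perp,\mathrm{app},\mathrm{push},\mathsf K,\mathsf S,\mathrm{QP})$ by $\Lambda=\Pi=A$; $s\perp\pi$ iff $s\le\pi$; $\mathrm{app}(s,t)=st$; $\mathrm{push}(s,\pi)=s\to\pi$; $\mathsf K=\mathsf k$, $\mathsf S=\mathsf s$; $\mathrm{QP}=\Phi$. Then $\mathcal K_{\mathcal A\bullet}$ is an abstract Krivine structure.
   Context: A full adjunction implicative ordered combinatory algebra is an inf-complete poset $(A,\le)$ with application $(a,b)\mapsto ab$ monotone in both arguments (associating to the left), implication $(a,b)\mapsto a\to b$ antimonotone in the first and monotone in the second argument (associating to the right), elements $\mathsf k,\mathsf s$ with $\mathsf k ab\le a$ and $\mathsf s abc\le ac(bc)$ for all $a,b,c$, such that $a\le b\to c$ implies $ab\le c$, and $ab\le c$ implies $a\le b\to c$, and a subset $\Phi\subseteq A$ closed under application containing $\mathsf s,\mathsf k$. An abstract Krivine structure consists of sets $\Lambda,\Pi$, a relation $\perp\subseteq\Lambda\times\Pi$, a map $\mathrm{push}:\Lambda\times\Pi\to\Pi$ written $t\cdot\pi$ (associating to the right), an application $\Lambda\times\Lambda\to\Lambda$ written $ts$, a subset $\mathrm{QP}\subseteq\Lambda$ closed under application, and $\mathsf K,\mathsf S\in\mathrm{QP}$ such that for all $t,s,u\in\Lambda,\pi\in\Pi$: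 $t\perp s\cdot\pi\Rightarrow ts\perp\pi$; $t\perp\pi\Rightarrow\mathsf K\perp t\cdot s\cdot\pi$; $tu(su)\perp\pi\Rightarrow\mathsf S\perp t\cdot s\cdot u\cdot\pi$. *)

theory Defs
  imports Main
begin

definition is_inf :: "('a \<Rightarrow> 'a \<Rightarrow> bool) \<Rightarrow> 'a set \<Rightarrow> 'a \<Rightarrow> bool" where
  "is_inf le X m \<longleftrightarrow> (\<forall>x\<in>X. le m x) \<and> (\<forall>y. (\<forall>x\<in>X. le y x) \<longrightarrow> le y m)"

definition full_adj_IOCA ::
  "('a \<Rightarrow> 'a \<Rightarrow> bool) \<Rightarrow> ('a \<Rightarrow> 'a \<Rightarrow> 'a) \<Rightarrow> ('a \<Rightarrow> 'a \<Rightarrow> 'a) \<Rightarrow> 'a \<Rightarrow> 'a \<Rightarrow> 'a set \<Rightarrow> bool" where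
  "full_adj_IOCA le app imp k s Phi \<longleftrightarrow>
     (\<forall>a. le a a) \<and> (\<forall>a b c. le a b \<longrightarrow> le b c \<longrightarrow> le a c) \<and> (\<forall>a b. le a b \<longrightarrow> le b a \<longrightarrow> a = b) \<and>
     (\<forall>X. \<exists>m. is_inf le X m) \<and>
     (\<forall>a a' b b'. le a a' \<longrightarrow> le b b' \<longrightarrow> le (app a b) (app a' b')) \<and>
     (\<forall>a a' b b'. le a' a \<longrightarrow> le b b' \<longrightarrow> le (imp a b) (imp a' b')) \<and>
     (\<forall>a b. le (app (app k a) b) a) \<and>
     (\<forall>a b c. le (app (app (app s a) b) c) (app (app a c) (app b c))) \<and>
     (\<forall>a b c. le a (imp b c) \<longrightarrow> le (app a b) c) \<and>
     (\<forall>a b c. le (app a b) c \<longrightarrow> le a (imp b c)) \<and>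
     (\<forall>a\<in>Phi. \<forall>b\<in>Phi. app a b \<in> Phi) \<and> s \<in> Phi \<and> k \<in> Phi"

definition abstract_krivine_structure ::
  "('l \<Rightarrow> 'p \<Rightarrow> bool) \<Rightarrow> ('l \<Rightarrow> 'l \<Rightarrow> 'l) \<Rightarrow> ('l \<Rightarrow> 'p \<Rightarrow> 'p) \<Rightarrow> 'l \<Rightarrow> 'l \<Rightarrow> 'l set \<Rightarrow> bool" where
  "abstract_krivine_structure perp app push K S QP \<longleftrightarrow>
     (\<forall>t\<in>QP. \<forall>u\<in>QP. app t u \<in> QP) \<and> K \<in> QP \<and> S \<in> QP \<and>
     (\<forall>t s \<pi>. perp t (push s \<pi>) \<longrightarrow> perp (app t s) \<pi>) \<and>
     (\<forall>t s \<pi>. perp t \<pi> \<longrightarrow> perp K (push t (push s \<pi>))) \<and>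
     (\<forall>t s u \<pi>. perp (app (app t u) (app s u)) \<pi> \<longrightarrow> perp S (push t (push s (push u \<pi>))))"

end

theory Submission
  imports Defs
begin

text \<open>The Krivine conditions for \<open>K\<close> and \<open>S\<close> are the combinator inequalities,
  weakened by transitivity and then curried by the adjunction \<open>ab \<le> c \<Longrightarrow> a \<le> b \<rightarrow> c\<close>
  once per argument; the application rule is the other direction of the adjunction.\<close>

context
  fixes le :: "'a \<Rightarrow> 'a \<Rightarrow> bool" and app imp :: "'a \<Rightarrow> 'a \<Rightarrow> 'a" and k s :: 'a and Phi :: "'a set"
  assumes IOCA: "full_adj_IOCA le app imp k s Phi"
begin

lemma full_adj_IOCA_trans [rule_format]: "\<forall>a b c. le a b \<longrightarrow> le b c \<longrightarrow> le a c"
  using IOCA[unfolded full_adj_IOCA_def] by (elim conjE)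

lemma full_adj_IOCA_k [rule_format]: "\<forall>a b. le (app (app k a) b) a"
  using IOCA[unfolded full_adj_IOCA_def] by (elim conjE)

lemma full_adj_IOCA_s [rule_format]: "\<forall>a b c. le (app (app (app s a) b) c) (app (app a c) (app b c))"
  using IOCA[unfolded full_adj_IOCA_def] by (elim conjE)

lemma full_adj_IOCA_uncurry [rule_format]: "\<forall>a b c. le a (imp b c) \<longrightarrow> le (app a b) c"
  using IOCA[unfolded full_adj_IOCA_def] by (elim conjE)

lemma full_adj_IOCA_curry [rule_format]: "\<forall>a b c. le (app a b) c \<longrightarrow> le a (imp b c)"
  using IOCA[unfolded full_adj_IOCA_def] by (elim conjE)

lemma full_adj_IOCA_app_closed [rule_format]: "\<forall>a\<in>Phi. \<forall>b\<in>Phi. app a b \<in> Phi"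
  using IOCA[unfolded full_adj_IOCA_def] by (elim conjE)

lemma full_adj_IOCA_k_in: "k \<in> Phi"
  using IOCA[unfolded full_adj_IOCA_def] by (elim conjE)

lemma full_adj_IOCA_s_in: "s \<in> Phi"
  using IOCA[unfolded full_adj_IOCA_def] by (elim conjE)

lemma full_adj_IOCA_k_le_imp: "le t \<pi> \<Longrightarrow> le k (imp t (imp u \<pi>))"
  by (intro full_adj_IOCA_curry) (rule full_adj_IOCA_trans[OF full_adj_IOCA_k])

lemma full_adj_IOCA_s_le_imp: "le (app (app t v) (app u v)) \<pi> \<Longrightarrow> le s (imp t (imp u (imp v \<pi>)))"
  by (intro full_adj_IOCA_curry) (rule full_adj_IOCA_trans[OF full_adj_IOCA_s])

end

theorem mainTheorem11:
  fixes le :: "'a \<Rightarrow> 'a \<Rightarrow> bool" and app imp :: "'a \<Rightarrow> 'a \<Rightarrow> 'a"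
    and k s :: 'a and Phi :: "'a set"
  assumes "full_adj_IOCA le app imp k s Phi"
  shows "abstract_krivine_structure (\<lambda>t \<pi>. le t \<pi>) app (\<lambda>t \<pi>. imp t \<pi>) k s Phi"
  unfolding abstract_krivine_structure_def
proof (intro conjI allI impI)
  show "le k (imp t (imp u \<pi>))" if "le t \<pi>" for t u \<pi>
    using full_adj_IOCA_k_le_imp[OF assms that] .
  show "le s (imp t (imp u (imp v \<pi>)))" if "le (app (app t v) (app u v)) \<pi>" for t u v \<pi>
    using full_adj_IOCA_s_le_imp[OF assms that] .
  show "le (app t u) \<pi>" if "le t (imp u \<pi>)" for t u \<pi>
    using full_adj_IOCA_uncurry[OF assms that] .
qed (use full_adj_IOCA_app_closed[OF assms] full_adj_IOCA_k_in[OF assms] full_adj_IOCA_s_in[OF assms] in auto)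

end
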